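(* Let $\rho$ be $\mathfrak L$-regular, $g>0$, $K\ge2$ and $t=g/(K\log K)$. For every $E\in\mathbb R$ there exist constants $C,c>0$ (depending on $E,K$, and on $g,\rho$) such that for all $x\in\mathbb R$: (1) $\dfrac{c}{1+x^2}\le p_E(x)\le\dfrac{C}{1+x^2}$; (2) $\dfrac{c}{1+|x+E|^2}\le\rho_E(x)\le\dfrac{C}{1+|x+E|^2}$; and moreover (3) $\|\rho_E\|_\infty\le\|\rho\|_\infty$.
   Context: A probability density $p:\mathbb R\to[0,\infty)$ is $\mathfrak L$-regular ($\mathfrak L>0$) if: (i) $p(x)\le\mathfrak L(1+x^2)^{-1}$ for all $x$; (ii) $p(x)\ge\mathfrak L^{-1}$ for all $x\in[-\mathfrak L^{-1},\mathfrak L^{-1}]$; (iii) $p'$ exists everywhere and $|p'(x)|\le\mathfrak L(1+|x|)^{-1-1/\mathfrak L}$ for all $x$; (iv) for every $v>0$, $\inf_{|x|<v}p(x)>0$; (v) $p'(x)=0$ for only finitely many $x$. $V_0$ denotes a random variable with density $\rho$. Self-energy densities: for $E\in\mathbb R$, $p_E$ is the density of a fixed (arbitrarily chosen) real-valued solution $\Gamma$ of the distributional equation $\Gamma\overset{d}{=}\big(V_0-E-t^2\sum_{i=1}^K\Gamma_i\big)^{-1}$, where $\Gamma_1,\dots,\Gamma_K$ are i.i.d. copies of $\Gamma$ independent of $V_0$. $\rho_E$ denotes the density of $V_0-E-t^2\sum_{i=1}^{K-1}\Gamma_i$, where $\Gamma_i$ are i.i.d. with density $p_E$ and independent of $V_0$.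 *)

theory Defs
  imports "HOL-Probability.Probability"
begin

definition prob_density :: "(real \<Rightarrow> real) \<Rightarrow> bool" where
  "prob_density f \<longleftrightarrow> f \<in> borel_measurable lborel \<and> (\<forall>x. 0 \<le> f x)
     \<and> (\<integral>\<^sup>+ x. ennreal (f x) \<partial>lborel) = 1"

definition L_regular :: "real \<Rightarrow> (real \<Rightarrow> real) \<Rightarrow> bool" where
  "L_regular L p \<longleftrightarrow> L > 0
     \<and> (\<forall>x. p x \<le> L / (1 + x\<^sup>2))
     \<and> (\<forall>x. \<bar>x\<bar> \<le> 1 / L \<longrightarrow> p x \<ge> 1 / L)
     \<and> (\<forall>x. p differentiable (at x))
     \<and> (\<forall>x. \<bar>deriv p x\<bar> \<le> L * (1 + \<bar>x\<bar>) powr (-1 - 1 / L))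
     \<and> (\<forall>v>0. (INF x\<in>{x. \<bar>x\<bar> < v}. p x) > 0)
     \<and> finite {x. deriv p x = 0}"

definition shifted_sum_law ::
  "(real \<Rightarrow> real) \<Rightarrow> (real \<Rightarrow> real) \<Rightarrow> real \<Rightarrow> real \<Rightarrow> nat \<Rightarrow> real measure" where
  "shifted_sum_law rho p t E n =
     distr (density lborel rho \<Otimes>\<^sub>M PiM {..<n} (\<lambda>_. density lborel p)) borel
       (\<lambda>(v, \<gamma>). v - E - t\<^sup>2 * (\<Sum>i<n. \<gamma> i))"

definition self_energy_density ::
  "(real \<Rightarrow> real) \<Rightarrow> real \<Rightarrow> nat \<Rightarrow> real \<Rightarrow> (real \<Rightarrow> real) \<Rightarrow> bool" where
  "self_energy_density rho t K E p \<longleftrightarrow> prob_density p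
     \<and> distr (shifted_sum_law rho p t E K) borel inverse = density lborel p"

text \<open>The (canonical, pointwise) density rho_E of V0 - E - t^2 sum_{i<K-1} Gamma_i.\<close>
definition rhoE ::
  "(real \<Rightarrow> real) \<Rightarrow> (real \<Rightarrow> real) \<Rightarrow> real \<Rightarrow> real \<Rightarrow> nat \<Rightarrow> real \<Rightarrow> real" where
  "rhoE rho p t E K x =
     (\<integral> \<gamma>. rho (x + E + t\<^sup>2 * (\<Sum>i<K - 1. \<gamma> i)) \<partial>(PiM {..<K - 1} (\<lambda>_. density lborel p)))"

end

(* The density of V0 - E - t^2 (Gamma_1 + ... + Gamma_n) arises from rho by n successive
   convolutions with the law of t^2 Gamma.  Convolution with a density whose tails are at most
   D/u^2 preserves decay of order 1/(1 + b^2) as well as positivity on compact sets, and once the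
   tails are also at least c/u^2 it turns positivity near the origin into a lower bound of order
   1/(1 + b^2).  Since Gamma has the law of 1/X, where X = V0 - E - t^2 (Gamma_1 + ... + Gamma_K)
   has density f, its density p(u) = f(1/u)/u^2 has tails of both kinds: f is bounded by sup rho
   and positive on compact sets.  Hence f, and likewise rho_E, decay exactly like
   1/(1 + (y + E)^2); the map x |-> 1/x turns this into decay exactly like 1/(1 + x^2) for p.
   Finally rho_E is an average of values of rho, so it never exceeds sup rho. *)

theory Submission
  imports Defs
begin

section \<open>Inversion of densities on the real line\<close>

lemma nn_integral_inverse_interval:
  fixes F :: "real \<Rightarrow> ennreal"
  assumes F[measurable]: "F \<in> borel_measurable borel" and ab: "a < b" and nz: "0 < a \<or> b < 0"
  shows "(\<integral>\<^sup>+y. F y * indicator {1/b..1/a} y \<partial>lborel)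
       = (\<integral>\<^sup>+x. F (1/x) * ennreal (1/x\<^sup>2) * indicator {a..b} x \<partial>lborel)"
proof -
  have nz': "x \<in> {a..b} \<Longrightarrow> x \<noteq> 0" for x using ab nz by auto
  have der: "((\<lambda>x. - 1/x) has_real_derivative 1/x\<^sup>2) (at x)" if "x \<in> {a..b}" for x
    using nz'[OF that] by (auto intro!: derivative_eq_intros simp: power2_eq_square field_simps)
  have cont: "continuous_on {a..b} (\<lambda>x::real. 1/x\<^sup>2)"
    using nz' by (auto intro!: continuous_intros)
  have "(\<integral>\<^sup>+y. F y * indicator {1/b..1/a} y \<partial>lborel)
      = (\<integral>\<^sup>+z. F (- z) * indicator {- 1/a..- 1/b} z \<partial>lborel)"
    by (subst nn_integral_real_affine[of _ "-1" 0])
       (auto intro!: nn_integral_cong split: split_indicator)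
  also have "\<dots> = (\<integral>\<^sup>+x. F (- (- 1/x)) * ennreal (1/x\<^sup>2) * indicator {a..b} x \<partial>lborel)"
    using nn_integral_substitution_aux[OF _ _ der cont _ ab, of "\<lambda>z. F (- z)"] by simp
  finally show ?thesis by simp
qed

definition annulus :: "real \<Rightarrow> real set"
  where "annulus r = {x. 1 / r \<le> \<bar>x\<bar> \<and> \<bar>x\<bar> \<le> r}"

lemma annulus_measurable[measurable]: "annulus r \<in> sets borel"
  unfolding annulus_def by measurable

lemma nn_integral_inverse_annulus:
  fixes F :: "real \<Rightarrow> ennreal"
  assumes F[measurable]: "F \<in> borel_measurable borel" and r: "1 < r"
  shows "(\<integral>\<^sup>+y. F y * indicator (annulus r) y \<partial>lborel)
       = (\<integral>\<^sup>+x. F (1/x) * ennreal (1/x\<^sup>2) * indicator (annulus r) x \<partial>lborel)"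
proof -
  have r': "0 < 1 / r" "1 / r < r" using r by (auto simp: divide_less_eq less_trans[OF r])
  have split: "indicator (annulus r) x = (indicator {- r .. - 1/r} x + indicator {1/r .. r} x :: ennreal)"
    for x
  proof -
    define s where "s = 1 / r"
    have "0 < s" "s < r" using r' by (simp_all add: s_def)
    then show ?thesis unfolding annulus_def minus_divide_left[symmetric] s_def[symmetric]
      by (auto split: split_indicator)
  qed
  have "(\<integral>\<^sup>+y. F y * indicator {- r .. - 1/r} y \<partial>lborel)
      = (\<integral>\<^sup>+x. F (1/x) * ennreal (1/x\<^sup>2) * indicator {- r .. - 1/r} x \<partial>lborel)"
    using nn_integral_inverse_interval[OF F, of "- r" "- 1/r"] r' by (simp add: field_simps)
  moreover have "(\<integral>\<^sup>+y. F y * indicator {1/r .. r} y \<partial>lborel)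
      = (\<integral>\<^sup>+x. F (1/x) * ennreal (1/x\<^sup>2) * indicator {1/r .. r} x \<partial>lborel)"
    using nn_integral_inverse_interval[OF F, of "1/r" r] r' by simp
  ultimately show ?thesis unfolding split distrib_left by (simp add: nn_integral_add)
qed

lemma incseq_annulus: "incseq (\<lambda>n. annulus (real n + 2))"
proof (rule incseq_SucI)
  fix n
  have "1 / (real (Suc n) + 2) \<le> 1 / (real n + 2)" by (simp add: field_simps)
  then show "annulus (real n + 2) \<subseteq> annulus (real (Suc n) + 2)"
    unfolding annulus_def by auto
qed

lemma UN_annulus: "(\<Union>n. annulus (real n + 2)) = - {0}"
proof (intro equalityI subsetI)
  fix x :: real assume "x \<in> - {0}"
  obtain n :: nat where "max \<bar>x\<bar> (1 / \<bar>x\<bar>) < n" using reals_Archimedean2 by blast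
  with \<open>x \<in> - {0}\<close> have "x \<in> annulus (real n + 2)" by (auto simp: annulus_def field_simps)
  then show "x \<in> (\<Union>n. annulus (real n + 2))" by blast
qed (auto simp: annulus_def)

lemma nn_integral_inverse:
  fixes F :: "real \<Rightarrow> ennreal"
  assumes F[measurable]: "F \<in> borel_measurable borel"
  shows "(\<integral>\<^sup>+y. F y \<partial>lborel) = (\<integral>\<^sup>+x. F (1/x) * ennreal (1/x\<^sup>2) \<partial>lborel)"
proof -
  define G where "G x = F (1/x) * ennreal (1/x\<^sup>2)" for x
  have [measurable]: "G \<in> borel_measurable borel" unfolding G_def by measurable
  have lim: "(\<lambda>n. emeasure (density lborel H) (annulus (real n + 2)))
      \<longlonglongrightarrow> emeasure (density lborel H) (- {0})" for H :: "real \<Rightarrow> ennreal"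
    using Lim_emeasure_incseq[OF _ incseq_annulus, of "density lborel H"]
    by (simp add: UN_annulus image_subset_iff)
  have "emeasure (density lborel F) (annulus (real n + 2))
      = emeasure (density lborel G) (annulus (real n + 2))" for n
    using nn_integral_inverse_annulus[OF F, of "real n + 2"] by (simp add: emeasure_density G_def)
  then have "emeasure (density lborel F) (- {0}) = emeasure (density lborel G) (- {0})"
    using lim[of F] lim[of G] LIMSEQ_unique by simp
  moreover have "(\<integral>\<^sup>+y. H y \<partial>lborel) = emeasure (density lborel H) (- {0})"
    if [measurable]: "H \<in> borel_measurable borel" for H :: "real \<Rightarrow> ennreal"
  proof -
    have "AE y in lborel. H y = H y * indicator (- {0}) y"
      using AE_lborel_singleton[of 0] by eventually_elim simp
    then show ?thesis by (simp add: emeasure_density nn_integral_cong_AE)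
  qed
  ultimately show ?thesis unfolding G_def by simp
qed

definition inverse_density :: "(real \<Rightarrow> ennreal) \<Rightarrow> real \<Rightarrow> ennreal"
  where "inverse_density f x = f (1 / x) * ennreal (1 / x\<^sup>2)"

lemma inverse_density_measurable[measurable]:
  assumes [measurable]: "f \<in> borel_measurable borel"
  shows "inverse_density f \<in> borel_measurable borel"
  unfolding inverse_density_def by measurable

lemma distr_inverse_density:
  fixes f :: "real \<Rightarrow> ennreal"
  assumes f[measurable]: "f \<in> borel_measurable borel"
  shows "distr (density lborel f) borel inverse = density lborel (inverse_density f)"
proof (rule measure_eqI)
  fix A assume "A \<in> sets (distr (density lborel f) borel inverse)"
  then have A[measurable]: "A \<in> sets borel" by simp
  have "(inverse :: real \<Rightarrow> real) \<in> borel_measurable borel"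
    using borel_measurable_inverse[of "\<lambda>x. x" borel] by simp
  from measurable_sets[OF this A] have [measurable]: "inverse -` A \<in> sets borel" by simp
  have "emeasure (distr (density lborel f) borel inverse) A
      = (\<integral>\<^sup>+y. f y * indicator A (inverse y) \<partial>lborel)"
    by (simp add: emeasure_distr emeasure_density indicator_vimage[symmetric])
  also have "\<dots> = (\<integral>\<^sup>+x. f (1/x) * indicator A (inverse (1/x)) * ennreal (1/x\<^sup>2) \<partial>lborel)"
    by (rule nn_integral_inverse) measurable
  also have "\<dots> = emeasure (density lborel (inverse_density f)) A"
    by (auto simp: emeasure_density inverse_density_def inverse_eq_divide mult_ac
        intro!: nn_integral_cong)
  finally show "emeasure (distr (density lborel f) borel inverse) A
      = emeasure (density lborel (inverse_density f)) A" .
qed simp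

lemma inverse_shift_sq_bounds:
  fixes x E :: real
  assumes "x \<noteq> 0"
  shows "(1 + x\<^sup>2) / (2 + E\<^sup>2) \<le> (1 + (1/x + E)\<^sup>2) * x\<^sup>2"
    and "(1 + (1/x + E)\<^sup>2) * x\<^sup>2 \<le> 2 * (1 + E\<^sup>2) * (1 + x\<^sup>2)"
proof -
  have expand: "(1 + (1/x + E)\<^sup>2) * x\<^sup>2 = x\<^sup>2 + (1 + E * x)\<^sup>2"
    using assms by (simp add: power2_eq_square field_simps)
  \<comment> \<open>the quadratic form 1 + 2 E x + (1 + E^2) x^2 has determinant 1\<close>
  have "(1 + E\<^sup>2) * ((2 + E\<^sup>2) * (x\<^sup>2 + (1 + E * x)\<^sup>2) - (1 + x\<^sup>2))
      = (1 + E\<^sup>2 + (2 + E\<^sup>2) * E * x)\<^sup>2 + x\<^sup>2"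
    by (simp add: power2_eq_square algebra_simps)
  then have "0 \<le> (1 + E\<^sup>2) * ((2 + E\<^sup>2) * (x\<^sup>2 + (1 + E * x)\<^sup>2) - (1 + x\<^sup>2))" by simp
  then have "1 + x\<^sup>2 \<le> (2 + E\<^sup>2) * (x\<^sup>2 + (1 + E * x)\<^sup>2)"
    using add_pos_nonneg[of 1 "E\<^sup>2"] by (auto simp: zero_le_mult_iff)
  then show "(1 + x\<^sup>2) / (2 + E\<^sup>2) \<le> (1 + (1/x + E)\<^sup>2) * x\<^sup>2"
    unfolding expand by (simp add: divide_le_eq add_pos_nonneg mult.commute)
  have "2 * (1 + E\<^sup>2) * (1 + x\<^sup>2) = x\<^sup>2 + (1 + E * x)\<^sup>2 + ((1 - E * x)\<^sup>2 + x\<^sup>2 + 2 * E\<^sup>2)"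
    by (simp add: power2_eq_square algebra_simps)
  then show "(1 + (1/x + E)\<^sup>2) * x\<^sup>2 \<le> 2 * (1 + E\<^sup>2) * (1 + x\<^sup>2)"
    unfolding expand by simp
qed

lemma inverse_density_two_sided_decay:
  fixes G :: "real \<Rightarrow> ennreal"
  assumes lower: "\<And>b. ennreal (c / (1 + b\<^sup>2)) \<le> G b" and upper: "\<And>b. G b \<le> ennreal (C / (1 + b\<^sup>2))"
    and c: "c \<ge> 0" and C: "C \<ge> 0" and x: "x \<noteq> 0"
  shows "ennreal (c / (2 * (1 + E\<^sup>2)) / (1 + x\<^sup>2)) \<le> inverse_density (\<lambda>y. G (y + E)) x"
    and "inverse_density (\<lambda>y. G (y + E)) x \<le> ennreal (C * (2 + E\<^sup>2) / (1 + x\<^sup>2))"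
proof -
  define N where "N = (1 + (1/x + E)\<^sup>2) * x\<^sup>2"
  have N: "(1 + x\<^sup>2) / (2 + E\<^sup>2) \<le> N" "N \<le> 2 * (1 + E\<^sup>2) * (1 + x\<^sup>2)"
    unfolding N_def using inverse_shift_sq_bounds[OF x] by auto
  have lower_pos: "0 < (1 + x\<^sup>2) / (2 + E\<^sup>2)" by (simp add: add_pos_nonneg)
  then have N_pos: "N > 0" using N(1) by linarith
  have factor: "ennreal (a / (1 + (1/x + E)\<^sup>2)) * ennreal (1 / x\<^sup>2) = ennreal (a / N)" if "a \<ge> 0" for a
    using that by (simp add: N_def ennreal_mult[symmetric])
  have "ennreal (c / (2 * (1 + E\<^sup>2)) / (1 + x\<^sup>2)) \<le> ennreal (c / N)"
    using c N N_pos by (intro ennreal_leI) (simp add: divide_left_mono add_pos_nonneg)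
  also have "\<dots> \<le> inverse_density (\<lambda>y. G (y + E)) x"
    unfolding inverse_density_def factor[OF c, symmetric] by (intro mult_right_mono lower) simp
  finally show "ennreal (c / (2 * (1 + E\<^sup>2)) / (1 + x\<^sup>2)) \<le> inverse_density (\<lambda>y. G (y + E)) x" .
  have "inverse_density (\<lambda>y. G (y + E)) x \<le> ennreal (C / N)"
    unfolding inverse_density_def factor[OF C, symmetric] by (intro mult_right_mono upper) simp
  also have "\<dots> \<le> ennreal (C / ((1 + x\<^sup>2) / (2 + E\<^sup>2)))"
    using C N(1) mult_pos_pos[OF N_pos lower_pos] by (intro ennreal_leI divide_left_mono) auto
  finally show "inverse_density (\<lambda>y. G (y + E)) x \<le> ennreal (C * (2 + E\<^sup>2) / (1 + x\<^sup>2))"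
    by simp
qed

lemma inverse_density_tail_lower:
  fixes G :: "real \<Rightarrow> ennreal"
  assumes G: "\<And>b. \<bar>b\<bar> \<le> 1 + \<bar>E\<bar> \<Longrightarrow> ennreal m \<le> G b" and m: "m \<ge> 0" and u: "1 \<le> \<bar>u\<bar>"
  shows "ennreal (m / u\<^sup>2) \<le> inverse_density (\<lambda>y. G (y + E)) u"
proof -
  have "\<bar>1 / u\<bar> \<le> 1" using u by (simp add: abs_div)
  then have "\<bar>1 / u + E\<bar> \<le> 1 + \<bar>E\<bar>" using abs_triangle_ineq[of "1 / u" E] by linarith
  with G have "ennreal m * ennreal (1 / u\<^sup>2) \<le> inverse_density (\<lambda>y. G (y + E)) u"
    unfolding inverse_density_def by (intro mult_right_mono) auto
  then show ?thesis using m by (simp add: ennreal_mult[symmetric])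
qed

lemma inverse_density_le:
  fixes G :: "real \<Rightarrow> ennreal"
  assumes G: "\<And>b. G b \<le> ennreal B" and B: "B \<ge> 0"
  shows "inverse_density (\<lambda>y. G (y + E)) u \<le> ennreal (B / u\<^sup>2)"
proof -
  have "inverse_density (\<lambda>y. G (y + E)) u \<le> ennreal B * ennreal (1 / u\<^sup>2)"
    unfolding inverse_density_def using G by (intro mult_right_mono) auto
  then show ?thesis using B by (simp add: ennreal_mult[symmetric])
qed

section \<open>Sums of scaled independent perturbations\<close>

text \<open>The density at b of V0 - t^2 (Gamma_1 + ... + Gamma_n), where V0 has density rho and the
  Gamma_i are i.i.d. with law P, independent of V0.\<close>

definition perturbed_density :: "(real \<Rightarrow> real) \<Rightarrow> real measure \<Rightarrow> real \<Rightarrow> nat \<Rightarrow> real \<Rightarrow> ennreal"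
  where "perturbed_density rho P t n b =
    (\<integral>\<^sup>+\<gamma>. ennreal (rho (b + t\<^sup>2 * (\<Sum>i<n. \<gamma> i))) \<partial>PiM {..<n} (\<lambda>_. P))"

locale perturbed_law =
  fixes rho :: "real \<Rightarrow> real" and P :: "real measure" and t :: real
  assumes rho_measurable[measurable]: "rho \<in> borel_measurable borel"
    and rho_nonneg: "\<And>x. 0 \<le> rho x"
    and rho_integral: "(\<integral>\<^sup>+x. ennreal (rho x) \<partial>lborel) = 1"
    and prob_space_P: "prob_space P"
    and sets_P[measurable_cong]: "sets P = sets borel"
begin

lemma prob_space_PiM_P: "prob_space (PiM I (\<lambda>_::nat. P))"
  by (rule prob_space_PiM) (rule prob_space_P)

lemma perturbed_density_measurable[measurable]:
  "perturbed_density rho P t n \<in> borel_measurable borel"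
proof -
  interpret prob_space "PiM {..<n} (\<lambda>_::nat. P)" by (rule prob_space_PiM_P)
  show ?thesis unfolding perturbed_density_def
    by (rule borel_measurable_nn_integral) measurable
qed

lemma perturbed_density_0: "perturbed_density rho P t 0 b = ennreal (rho b)"
  by (simp add: perturbed_density_def PiM_empty nn_integral_count_space_finite)

lemma perturbed_density_Suc:
  "perturbed_density rho P t (Suc n) a = (\<integral>\<^sup>+u. perturbed_density rho P t n (a + t\<^sup>2 * u) \<partial>P)"
proof -
  interpret product_sigma_finite "\<lambda>_::nat. P"
    by (rule product_sigma_finite.intro) (use prob_space_P prob_space_imp_sigma_finite in auto)
  have sum: "(\<Sum>i\<in>insert n {..<n}. (\<gamma>(n := u)) i) = u + (\<Sum>i<n. \<gamma> i)" for \<gamma> :: "nat \<Rightarrow> real" and u :: real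
    by (simp add: sum.insert)
  have "perturbed_density rho P t (Suc n) a
      = (\<integral>\<^sup>+\<gamma>. ennreal (rho (a + t\<^sup>2 * (\<Sum>i\<in>insert n {..<n}. \<gamma> i))) \<partial>PiM (insert n {..<n}) (\<lambda>_. P))"
    unfolding perturbed_density_def lessThan_Suc ..
  also have "\<dots> = (\<integral>\<^sup>+u. \<integral>\<^sup>+\<gamma>. ennreal (rho (a + t\<^sup>2 * (\<Sum>i\<in>insert n {..<n}. (\<gamma>(n := u)) i)))
      \<partial>PiM {..<n} (\<lambda>_. P) \<partial>P)"
    by (rule product_nn_integral_insert_rev) auto
  also have "\<dots> = (\<integral>\<^sup>+u. perturbed_density rho P t n (a + t\<^sup>2 * u) \<partial>P)"
    unfolding sum perturbed_density_def by (simp add: algebra_simps)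
  finally show ?thesis .
qed

lemma nn_integral_perturbed_density: "(\<integral>\<^sup>+b. perturbed_density rho P t n b \<partial>lborel) = 1"
proof (induction n)
  case 0
  then show ?case by (simp add: perturbed_density_0 rho_integral)
next
  case (Suc n)
  interpret P: prob_space P by (rule prob_space_P)
  interpret pair_sigma_finite lborel P by unfold_locales
  have shift: "(\<integral>\<^sup>+a. perturbed_density rho P t n (a + t\<^sup>2 * u) \<partial>lborel) = 1" for u :: real
    using nn_integral_real_affine[OF perturbed_density_measurable, where c=1 and t="t\<^sup>2 * u"] Suc.IH
    by (simp add: add.commute)
  have "(\<integral>\<^sup>+b. perturbed_density rho P t (Suc n) b \<partial>lborel)
      = (\<integral>\<^sup>+u. \<integral>\<^sup>+a. perturbed_density rho P t n (a + t\<^sup>2 * u) \<partial>lborel \<partial>P)"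
    unfolding perturbed_density_Suc by (rule Fubini'[symmetric]) measurable
  also have "\<dots> = 1" by (simp add: shift P.emeasure_space_1)
  finally show ?case .
qed

lemma perturbed_density_le:
  assumes "\<And>x. rho x \<le> B" shows "perturbed_density rho P t n b \<le> ennreal B"
proof -
  interpret prob_space "PiM {..<n} (\<lambda>_::nat. P)" by (rule prob_space_PiM_P)
  have "perturbed_density rho P t n b \<le> (\<integral>\<^sup>+\<gamma>. ennreal B \<partial>PiM {..<n} (\<lambda>_. P))"
    unfolding perturbed_density_def by (intro nn_integral_mono ennreal_leI assms)
  then show ?thesis by (simp add: emeasure_space_1)
qed

lemma perturbed_density_eq_integral:
  assumes "\<And>x. rho x \<le> B"
  shows "perturbed_density rho P t n b
    = ennreal (\<integral>\<gamma>. rho (b + t\<^sup>2 * (\<Sum>i<n. \<gamma> i)) \<partial>PiM {..<n} (\<lambda>_. P))"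
proof -
  interpret prob_space "PiM {..<n} (\<lambda>_::nat. P)" by (rule prob_space_PiM_P)
  have "integrable (PiM {..<n} (\<lambda>_. P)) (\<lambda>\<gamma>. rho (b + t\<^sup>2 * (\<Sum>i<n. \<gamma> i)))"
    by (rule integrable_const_bound[where B=B]) (auto simp: rho_nonneg assms)
  then show ?thesis
    unfolding perturbed_density_def by (rule nn_integral_eq_integral) (simp add: rho_nonneg)
qed

lemma distr_perturbation:
  "distr (density lborel (\<lambda>x. ennreal (rho x)) \<Otimes>\<^sub>M PiM {..<n} (\<lambda>_. P)) borel
       (\<lambda>(v, \<gamma>). v - E - t\<^sup>2 * (\<Sum>i<n. \<gamma> i))
   = density lborel (\<lambda>y. perturbed_density rho P t n (y + E))"
  (is "distr (?V \<Otimes>\<^sub>M ?\<Gamma>) borel ?f = _")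
proof (rule measure_eqI)
  fix A assume "A \<in> sets (distr (?V \<Otimes>\<^sub>M ?\<Gamma>) borel ?f)"
  then have A[measurable]: "A \<in> sets borel" by simp
  interpret \<Gamma>: prob_space ?\<Gamma> by (rule prob_space_PiM_P)
  interpret V: prob_space ?V by (rule prob_spaceI) (simp add: emeasure_density rho_integral)
  interpret pair_sigma_finite ?V ?\<Gamma> by unfold_locales
  interpret L: pair_sigma_finite lborel ?\<Gamma> by unfold_locales
  have [measurable]: "?f \<in> borel_measurable (?V \<Otimes>\<^sub>M ?\<Gamma>)" by measurable
  have inner: "(\<integral>\<^sup>+v. indicator A (?f (v, \<gamma>)) \<partial>?V)
      = (\<integral>\<^sup>+y. ennreal (rho (y + E + t\<^sup>2 * (\<Sum>i<n. \<gamma> i))) * indicator A y \<partial>lborel)"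
    for \<gamma> :: "nat \<Rightarrow> real"
    using nn_integral_real_affine[where c=1 and t="E + t\<^sup>2 * (\<Sum>i<n. \<gamma> i)"
        and f="\<lambda>v. ennreal (rho v) * indicator A (v - E - t\<^sup>2 * (\<Sum>i<n. \<gamma> i))"]
    by (simp add: nn_integral_density add_ac)
  have "emeasure (distr (?V \<Otimes>\<^sub>M ?\<Gamma>) borel ?f) A = (\<integral>\<^sup>+z. indicator A (?f z) \<partial>(?V \<Otimes>\<^sub>M ?\<Gamma>))"
    by (simp add: nn_integral_distr flip: nn_integral_indicator)
  also have "\<dots> = (\<integral>\<^sup>+\<gamma>. \<integral>\<^sup>+v. indicator A (?f (v, \<gamma>)) \<partial>?V \<partial>?\<Gamma>)"
    by (rule nn_integral_snd[symmetric]) measurable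
  also have "\<dots> = (\<integral>\<^sup>+y. \<integral>\<^sup>+\<gamma>. ennreal (rho (y + E + t\<^sup>2 * (\<Sum>i<n. \<gamma> i))) * indicator A y \<partial>?\<Gamma> \<partial>lborel)"
    unfolding inner by (rule L.Fubini') measurable
  also have "\<dots> = emeasure (density lborel (\<lambda>y. perturbed_density rho P t n (y + E))) A"
    by (auto simp: emeasure_density perturbed_density_def nn_integral_multc add_ac
        intro!: nn_integral_cong)
  finally show "emeasure (distr (?V \<Otimes>\<^sub>M ?\<Gamma>) borel ?f) A
      = emeasure (density lborel (\<lambda>y. perturbed_density rho P t n (y + E))) A" .
qed simp

end

section \<open>Convolution with densities with Cauchy tails\<close>

lemma nn_integral_affine_le_inverse:
  fixes H :: "real \<Rightarrow> ennreal"
  assumes [measurable]: "H \<in> borel_measurable borel"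
    and H: "(\<integral>\<^sup>+b. H b \<partial>lborel) \<le> 1" and s: "s > 0"
  shows "(\<integral>\<^sup>+u. H (a + s * u) \<partial>lborel) \<le> ennreal (1 / s)"
proof -
  have "ennreal s * (\<integral>\<^sup>+u. H (a + s * u) \<partial>lborel) \<le> 1"
    using nn_integral_real_affine[of H s a] H s by simp
  then have "ennreal (1 / s) * (ennreal s * (\<integral>\<^sup>+u. H (a + s * u) \<partial>lborel)) \<le> ennreal (1 / s)"
    by (metis mult.right_neutral mult_left_mono zero_le)
  then show ?thesis
    using s by (simp add: mult.assoc[symmetric] ennreal_mult[symmetric])
qed

text \<open>Either s u is small compared with a, and H (a + s u) is of order 1/(1 + a^2), or
  u is large compared with a/s, and q u is of order s^2/a^2.\<close>

lemma product_split_bound: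
  fixes H q :: "real \<Rightarrow> ennreal"
  assumes HC: "\<And>b. H b \<le> ennreal (C / (1 + b\<^sup>2))"
    and qD: "\<And>u. 1 \<le> \<bar>u\<bar> \<Longrightarrow> q u \<le> ennreal (D / u\<^sup>2)"
    and C: "C \<ge> 0" and D: "D \<ge> 0" and s: "s > 0" and a: "2 * s \<le> \<bar>a\<bar>"
  shows "q u * H (a + s * u)
    \<le> ennreal (4 * C / (1 + a\<^sup>2)) * q u + ennreal (4 * D * s\<^sup>2 / a\<^sup>2) * H (a + s * u)"
proof (cases "\<bar>s * u\<bar> \<le> \<bar>a\<bar> / 2")
  case True
  then have "\<bar>a\<bar> / 2 \<le> \<bar>a + s * u\<bar>" by linarith
  then have "(\<bar>a\<bar> / 2)\<^sup>2 \<le> \<bar>a + s * u\<bar>\<^sup>2" by (intro power_mono) auto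
  then have "1 + a\<^sup>2 \<le> 4 * (1 + (a + s * u)\<^sup>2)" by (simp add: power_divide)
  then have "4 * C / (4 * (1 + (a + s * u)\<^sup>2)) \<le> 4 * C / (1 + a\<^sup>2)"
    using C by (intro divide_left_mono) (auto intro!: mult_pos_pos add_pos_nonneg)
  moreover have "C / (1 + (a + s * u)\<^sup>2) = 4 * C / (4 * (1 + (a + s * u)\<^sup>2))"
    by (simp only: mult_divide_mult_cancel_left_if) simp
  ultimately have "H (a + s * u) \<le> ennreal (4 * C / (1 + a\<^sup>2))"
    using HC[of "a + s * u"] by (metis ennreal_leI order.trans)
  then have "q u * H (a + s * u) \<le> ennreal (4 * C / (1 + a\<^sup>2)) * q u"
    by (simp add: mult.commute mult_left_mono)
  then show ?thesis by (simp add: add_increasing2)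
next
  case False
  then have au: "\<bar>a\<bar> < 2 * s * \<bar>u\<bar>" using s by (simp add: abs_mult)
  then have "1 \<le> \<bar>u\<bar>" using a s by (smt (verit) mult_le_cancel_left1)
  have "\<bar>a\<bar>\<^sup>2 \<le> (2 * s * \<bar>u\<bar>)\<^sup>2" using au by (intro power_mono) auto
  then have "a\<^sup>2 \<le> 4 * s\<^sup>2 * u\<^sup>2" by (simp add: power_mult_distrib)
  from mult_left_mono[OF this D] have "D * a\<^sup>2 \<le> 4 * D * s\<^sup>2 * u\<^sup>2" by (simp add: mult_ac)
  then have "D / u\<^sup>2 \<le> 4 * D * s\<^sup>2 / a\<^sup>2"
    using \<open>1 \<le> \<bar>u\<bar>\<close> a s by (simp add: field_simps)
  then have "q u \<le> ennreal (4 * D * s\<^sup>2 / a\<^sup>2)"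
    using qD[OF \<open>1 \<le> \<bar>u\<bar>\<close>] by (simp add: ennreal_leI order.trans)
  then have "q u * H (a + s * u) \<le> ennreal (4 * D * s\<^sup>2 / a\<^sup>2) * H (a + s * u)"
    by (simp add: mult_right_mono)
  then show ?thesis by (simp add: add_increasing)
qed

lemma convolution_decay_far:
  fixes H q :: "real \<Rightarrow> ennreal"
  assumes [measurable]: "H \<in> borel_measurable borel" "q \<in> borel_measurable borel"
    and H: "(\<integral>\<^sup>+b. H b \<partial>lborel) \<le> 1" and HC: "\<And>b. H b \<le> ennreal (C / (1 + b\<^sup>2))"
    and q: "(\<integral>\<^sup>+u. q u \<partial>lborel) = 1" and qD: "\<And>u. 1 \<le> \<bar>u\<bar> \<Longrightarrow> q u \<le> ennreal (D / u\<^sup>2)"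
    and C: "C \<ge> 0" and D: "D \<ge> 0" and s: "s > 0" and a: "max 1 (2 * s) \<le> \<bar>a\<bar>"
  shows "(\<integral>\<^sup>+u. H (a + s * u) \<partial>density lborel q) \<le> ennreal ((4 * C + 8 * D * s) / (1 + a\<^sup>2))"
proof -
  have "(\<integral>\<^sup>+u. H (a + s * u) \<partial>density lborel q) = (\<integral>\<^sup>+u. q u * H (a + s * u) \<partial>lborel)"
    by (simp add: nn_integral_density)
  also have "\<dots> \<le> (\<integral>\<^sup>+u. ennreal (4 * C / (1 + a\<^sup>2)) * q u
      + ennreal (4 * D * s\<^sup>2 / a\<^sup>2) * H (a + s * u) \<partial>lborel)"
    using a by (intro nn_integral_mono product_split_bound[OF HC qD C D s]) auto
  also have "\<dots> = ennreal (4 * C / (1 + a\<^sup>2))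
      + ennreal (4 * D * s\<^sup>2 / a\<^sup>2) * (\<integral>\<^sup>+u. H (a + s * u) \<partial>lborel)"
    using q by (subst nn_integral_add) (auto simp: nn_integral_cmult)
  also have "\<dots> \<le> ennreal (4 * C / (1 + a\<^sup>2)) + ennreal (4 * D * s\<^sup>2 / a\<^sup>2) * ennreal (1 / s)"
    by (intro add_left_mono mult_left_mono nn_integral_affine_le_inverse H s) auto
  also have "\<dots> = ennreal (4 * C / (1 + a\<^sup>2)) + ennreal (4 * D * s / a\<^sup>2)"
  proof -
    have "4 * D * s\<^sup>2 / a\<^sup>2 * (1 / s) = 4 * D * s / a\<^sup>2" using s by (simp add: power2_eq_square)
    then show ?thesis using D s by (simp add: ennreal_mult[symmetric])
  qed
  also have "\<dots> = ennreal (4 * C / (1 + a\<^sup>2) + 4 * D * s / a\<^sup>2)"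
    by (rule ennreal_plus[symmetric]) (use C D s in auto)
  also have "\<dots> \<le> ennreal ((4 * C + 8 * D * s) / (1 + a\<^sup>2))"
  proof (rule ennreal_leI)
    have "1 \<le> \<bar>a\<bar> ^ 2" using a by (intro one_le_power) simp
    then have "1 \<le> a\<^sup>2" by simp
    then have "8 * D * s / (2 * a\<^sup>2) \<le> 8 * D * s / (1 + a\<^sup>2)"
      using D s by (intro divide_left_mono) (auto intro!: mult_pos_pos simp: add_pos_nonneg)
    moreover have "4 * D * s / a\<^sup>2 = 8 * D * s / (2 * a\<^sup>2)" by simp
    ultimately have "4 * D * s / a\<^sup>2 \<le> 8 * D * s / (1 + a\<^sup>2)" by simp
    then show "4 * C / (1 + a\<^sup>2) + 4 * D * s / a\<^sup>2 \<le> (4 * C + 8 * D * s) / (1 + a\<^sup>2)"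
      by (simp add: add_divide_distrib)
  qed
  finally show ?thesis .
qed

lemma nn_integral_density_le_bound:
  fixes f q :: "real \<Rightarrow> ennreal"
  assumes [measurable]: "q \<in> borel_measurable borel"
    and q: "(\<integral>\<^sup>+u. q u \<partial>lborel) = 1" and f: "\<And>u. f u \<le> ennreal C"
  shows "(\<integral>\<^sup>+u. f u \<partial>density lborel q) \<le> ennreal C"
proof -
  have "(\<integral>\<^sup>+u. f u \<partial>density lborel q) \<le> (\<integral>\<^sup>+u. ennreal C \<partial>density lborel q)"
    using f by (intro nn_integral_mono)
  also have "\<dots> = ennreal C" using q by (subst nn_integral_density) (auto simp: nn_integral_multc)
  finally show ?thesis .
qed

lemma convolution_decay:
  fixes H q :: "real \<Rightarrow> ennreal"
  assumes [measurable]: "H \<in> borel_measurable borel" "q \<in> borel_measurable borel"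
    and H: "(\<integral>\<^sup>+b. H b \<partial>lborel) \<le> 1" and HC: "\<And>b. H b \<le> ennreal (C / (1 + b\<^sup>2))"
    and q: "(\<integral>\<^sup>+u. q u \<partial>lborel) = 1" and qD: "\<And>u. 1 \<le> \<bar>u\<bar> \<Longrightarrow> q u \<le> ennreal (D / u\<^sup>2)"
    and C: "C > 0" and D: "D \<ge> 0" and s: "s > 0"
  shows "\<exists>C'>0. \<forall>a. (\<integral>\<^sup>+u. H (a + s * u) \<partial>density lborel q) \<le> ennreal (C' / (1 + a\<^sup>2))"
proof -
  define A where "A = max 1 (2 * s)"
  define C' where "C' = C * (1 + A\<^sup>2) + (4 * C + 8 * D * s)"
  have "(\<integral>\<^sup>+u. H (a + s * u) \<partial>density lborel q) \<le> ennreal (C' / (1 + a\<^sup>2))" for a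
  proof (cases "\<bar>a\<bar> < A")
    case True
    have "C / (1 + b\<^sup>2) \<le> C / 1" for b using C by (intro divide_left_mono) (auto simp: add_pos_nonneg)
    with HC have "H b \<le> ennreal C" for b by (metis div_by_1 ennreal_leI order.trans)
    then have "(\<integral>\<^sup>+u. H (a + s * u) \<partial>density lborel q) \<le> ennreal C"
      by (intro nn_integral_density_le_bound q) auto
    also have "C \<le> C' / (1 + a\<^sup>2)"
    proof -
      have "a\<^sup>2 \<le> A\<^sup>2" using True by (simp add: abs_le_square_iff[symmetric])
      then have "C * (1 + a\<^sup>2) \<le> C * (1 + A\<^sup>2)" using C by (intro mult_left_mono) auto
      also have "\<dots> \<le> C'" unfolding C'_def using C D s by simp
      finally have "C * (1 + a\<^sup>2) \<le> C'" .
      then show ?thesis by (simp add: le_divide_eq add_pos_nonneg)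
    qed
    then have "ennreal C \<le> ennreal (C' / (1 + a\<^sup>2))" by (rule ennreal_leI)
    finally show ?thesis .
  next
    case False
    then have "(\<integral>\<^sup>+u. H (a + s * u) \<partial>density lborel q) \<le> ennreal ((4 * C + 8 * D * s) / (1 + a\<^sup>2))"
      unfolding A_def by (intro convolution_decay_far[OF _ _ H HC q qD]) (use C D s in auto)
    also have "(4 * C + 8 * D * s) / (1 + a\<^sup>2) \<le> C' / (1 + a\<^sup>2)"
      unfolding C'_def using C by (intro divide_right_mono) auto
    then have "ennreal ((4 * C + 8 * D * s) / (1 + a\<^sup>2)) \<le> ennreal (C' / (1 + a\<^sup>2))"
      by (rule ennreal_leI)
    finally show ?thesis .
  qed
  moreover have "C' > 0" unfolding C'_def using C D s by (simp add: add_pos_nonneg)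
  ultimately show ?thesis by blast
qed

lemma prob_space_ex_interval_pos:
  assumes P: "prob_space P" and sets: "sets P = sets borel"
  shows "\<exists>M::real. 0 < emeasure P {-M..M}"
proof (rule ccontr)
  assume "\<not> ?thesis"
  then have "emeasure P {- real n..real n} = 0" for n :: nat by (auto simp: not_gr_zero)
  then have "emeasure P (\<Union>n. {- real n..real n}) = 0"
    by (intro emeasure_UN_eq_0) (auto simp: sets)
  moreover have "(\<Union>n. {- real n..real n}) = space P"
  proof -
    have "x \<in> (\<Union>n. {- real n..real n})" for x :: real
    proof -
      obtain n where "\<bar>x\<bar> \<le> real n" using real_arch_simple by blast
      then have "x \<in> {- real n..real n}" by auto
      then show ?thesis by blast
    qed
    then show ?thesis using sets_eq_imp_space_eq[OF sets] by auto
  qed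
  ultimately show False using prob_space.emeasure_space_1[OF P] by simp
qed

lemma convolution_pos_on_compact:
  fixes H :: "real \<Rightarrow> ennreal"
  assumes [measurable]: "H \<in> borel_measurable borel"
    and H: "\<And>R. \<exists>m>0. \<forall>b. \<bar>b\<bar> \<le> R \<longrightarrow> ennreal m \<le> H b"
    and P: "prob_space P" and sets[measurable_cong]: "sets P = sets borel"
  shows "\<exists>m>0. \<forall>a. \<bar>a\<bar> \<le> R \<longrightarrow> ennreal m \<le> (\<integral>\<^sup>+u. H (a + s * u) \<partial>P)"
proof -
  obtain M where M: "0 < emeasure P {-M..M}" using prob_space_ex_interval_pos[OF P sets] by blast
  obtain m where m: "m > 0" "\<And>b. \<bar>b\<bar> \<le> R + \<bar>s\<bar> * \<bar>M\<bar> \<Longrightarrow> ennreal m \<le> H b"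
    using H by blast
  define e where "e = emeasure P {-M..M}"
  have "e \<noteq> \<top>"
    unfolding e_def using prob_space.emeasure_le_1[OF P, of "{-M..M}"] by (auto simp: top_unique)
  then have e: "0 < enn2real e" "ennreal (enn2real e) = e"
    using M unfolding e_def by (auto simp: enn2real_positive_iff less_top)
  show ?thesis
  proof (intro exI[of _ "m * enn2real e"] conjI allI impI)
    show "0 < m * enn2real e" using m e by simp
    fix a assume a: "\<bar>a\<bar> \<le> R"
    have "ennreal m * indicator {-M..M} u \<le> H (a + s * u)" for u
    proof (cases "u \<in> {-M..M}")
      case True
      have "\<bar>a + s * u\<bar> \<le> \<bar>a\<bar> + \<bar>s\<bar> * \<bar>u\<bar>" by (metis abs_mult abs_triangle_ineq)
      also have "\<dots> \<le> R + \<bar>s\<bar> * \<bar>M\<bar>" using a True by (auto intro!: add_mono mult_left_mono)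
      finally show ?thesis using m True by simp
    qed simp
    then have "ennreal m * e \<le> (\<integral>\<^sup>+u. H (a + s * u) \<partial>P)"
      unfolding e_def by (subst nn_integral_cmult_indicator[symmetric]) (auto intro!: nn_integral_mono)
    then show "ennreal (m * enn2real e) \<le> (\<integral>\<^sup>+u. H (a + s * u) \<partial>P)"
      using m e by (simp add: ennreal_mult)
  qed
qed

lemma tail_product_lower_bound:
  fixes H q :: "real \<Rightarrow> ennreal"
  assumes H: "\<And>b. \<bar>b\<bar> \<le> 1 \<Longrightarrow> ennreal m \<le> H b" and m: "m > 0"
    and q: "\<And>u. 1 \<le> \<bar>u\<bar> \<Longrightarrow> ennreal (c / u\<^sup>2) \<le> q u" and c: "c > 0"
    and s: "s > 0" and a: "1 + s \<le> \<bar>a\<bar>" and u: "\<bar>a + s * u\<bar> \<le> 1"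
  shows "ennreal (m * c * s\<^sup>2 / (\<bar>a\<bar> + 1)\<^sup>2) \<le> q u * H (a + s * u)"
proof -
  have "\<bar>a\<bar> - 1 \<le> \<bar>s * u\<bar>" "\<bar>s * u\<bar> \<le> \<bar>a\<bar> + 1" using u by linarith+
  moreover have "\<bar>s * u\<bar> = s * \<bar>u\<bar>" using s by (simp add: abs_mult)
  ultimately have su: "s \<le> s * \<bar>u\<bar>" "s * \<bar>u\<bar> \<le> \<bar>a\<bar> + 1" using a by linarith+
  then have u1: "1 \<le> \<bar>u\<bar>" using s by simp
  have "(s * \<bar>u\<bar>)\<^sup>2 \<le> (\<bar>a\<bar> + 1)\<^sup>2" using su s by (intro power_mono) auto
  then have "c * s\<^sup>2 / (\<bar>a\<bar> + 1)\<^sup>2 \<le> c / u\<^sup>2"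
    using c u1 by (simp add: field_simps power_mult_distrib mult_left_mono)
  then have "ennreal (c * s\<^sup>2 / (\<bar>a\<bar> + 1)\<^sup>2) * ennreal m \<le> q u * H (a + s * u)"
    using q[OF u1] H[OF u] by (intro mult_mono) (auto intro: ennreal_leI order.trans)
  then show ?thesis using c m by (simp add: ennreal_mult[symmetric] mult_ac)
qed

lemma convolution_tail_lower:
  fixes H q :: "real \<Rightarrow> ennreal"
  assumes [measurable]: "H \<in> borel_measurable borel" "q \<in> borel_measurable borel"
    and H: "\<And>b. \<bar>b\<bar> \<le> 1 \<Longrightarrow> ennreal m \<le> H b" and m: "m > 0"
    and q: "\<And>u. 1 \<le> \<bar>u\<bar> \<Longrightarrow> ennreal (c / u\<^sup>2) \<le> q u" and c: "c > 0"
    and s: "s > 0" and a: "1 + s \<le> \<bar>a\<bar>"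
  shows "ennreal (m * c * s / (1 + a\<^sup>2)) \<le> (\<integral>\<^sup>+u. H (a + s * u) \<partial>density lborel q)"
proof -
  define k where "k = m * c * s\<^sup>2 / (\<bar>a\<bar> + 1)\<^sup>2"
  define I where "I = {(-1 - a) / s .. (1 - a) / s}"
  have I: "u \<in> I \<longleftrightarrow> \<bar>a + s * u\<bar> \<le> 1" for u using s by (auto simp: I_def field_simps)
  have "ennreal k * indicator I u \<le> q u * H (a + s * u)" for u
    using tail_product_lower_bound[OF H m q c s a] I[of u] by (auto simp: k_def split: split_indicator)
  then have le: "ennreal k * emeasure lborel I \<le> (\<integral>\<^sup>+u. H (a + s * u) \<partial>density lborel q)"
    by (subst nn_integral_cmult_indicator[symmetric])
       (auto simp: I_def nn_integral_density intro!: nn_integral_mono)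
  have "m * c * s / (1 + a\<^sup>2) \<le> k * (2 / s)"
  proof -
    have "(\<bar>a\<bar> + 1)\<^sup>2 \<le> 2 * (1 + a\<^sup>2)"
      using zero_le_power2[of "\<bar>a\<bar> - 1"] by (simp add: power2_eq_square algebra_simps)
    then have "2 * (m * c * s) / (2 * (1 + a\<^sup>2)) \<le> 2 * (m * c * s) / (\<bar>a\<bar> + 1)\<^sup>2"
      using m c s by (intro divide_left_mono) (auto intro!: mult_pos_pos add_pos_nonneg)
    then have "m * c * s / (1 + a\<^sup>2) \<le> 2 * (m * c * s) / (\<bar>a\<bar> + 1)\<^sup>2"
      by (simp only: mult_divide_mult_cancel_left_if) simp
    also have "\<dots> = k * (2 / s)" using s by (simp add: k_def power2_eq_square)
    finally show ?thesis .
  qed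
  then have "ennreal (m * c * s / (1 + a\<^sup>2)) \<le> ennreal (k * (2 / s))" by (rule ennreal_leI)
  also have "\<dots> = ennreal k * ennreal (2 / s)"
    by (rule ennreal_mult) (use m c s in \<open>auto simp: k_def\<close>)
  also have "\<dots> = ennreal k * emeasure lborel I"
    using s by (simp add: I_def diff_divide_distrib[symmetric] divide_right_mono)
  finally show ?thesis using le by (rule order.trans)
qed

locale heavy_tailed_perturbation = perturbed_law +
  fixes Q :: "real \<Rightarrow> ennreal" and L D :: real
  assumes Q_measurable[measurable]: "Q \<in> borel_measurable borel"
    and P_density: "P = density lborel Q"
    and rho_decay: "\<And>x. rho x \<le> L / (1 + x\<^sup>2)" and L_pos: "L > 0"
    and Q_tail: "\<And>u. 1 \<le> \<bar>u\<bar> \<Longrightarrow> Q u \<le> ennreal (D / u\<^sup>2)" and D_nonneg: "D \<ge> 0"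
    and rho_pos_on_compact: "\<And>R. \<exists>m>0. \<forall>b. \<bar>b\<bar> \<le> R \<longrightarrow> m \<le> rho b"
    and t_pos: "t > 0"
begin

lemma nn_integral_Q: "(\<integral>\<^sup>+u. Q u \<partial>lborel) = 1"
  using prob_space.emeasure_space_1[OF prob_space_P] by (simp add: P_density emeasure_density)

lemma perturbed_density_Suc_density:
  "perturbed_density rho P t (Suc n) a
    = (\<integral>\<^sup>+u. perturbed_density rho P t n (a + t\<^sup>2 * u) \<partial>density lborel Q)"
  using perturbed_density_Suc by (simp add: P_density)

lemma perturbed_density_decay: "\<exists>C>0. \<forall>b. perturbed_density rho P t n b \<le> ennreal (C / (1 + b\<^sup>2))"
proof (induction n)
  case 0
  show ?case using L_pos rho_decay by (auto simp: perturbed_density_0 intro!: exI[of _ L] ennreal_leI)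
next
  case (Suc n)
  then obtain C where "C > 0" "\<And>b. perturbed_density rho P t n b \<le> ennreal (C / (1 + b\<^sup>2))" by blast
  with convolution_decay[OF _ _ _ _ nn_integral_Q Q_tail, of "perturbed_density rho P t n" C "t\<^sup>2"]
  show ?case
    using nn_integral_perturbed_density D_nonneg t_pos by (simp add: perturbed_density_Suc_density)
qed

lemma perturbed_density_pos_on_compact:
  "\<exists>m>0. \<forall>b. \<bar>b\<bar> \<le> R \<longrightarrow> ennreal m \<le> perturbed_density rho P t n b"
proof (induction n arbitrary: R)
  case 0
  show ?case using rho_pos_on_compact[of R] by (auto simp: perturbed_density_0 intro: ennreal_leI)
next
  case (Suc n)
  show ?case
    using convolution_pos_on_compact[OF _ Suc.IH prob_space_P sets_P, of R "t\<^sup>2"]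
    by (simp add: perturbed_density_Suc)
qed

lemma perturbed_density_lower_decay:
  assumes Q_lower: "\<And>u. 1 \<le> \<bar>u\<bar> \<Longrightarrow> ennreal (c0 / u\<^sup>2) \<le> Q u" and c0: "c0 > 0"
  shows "\<exists>c>0. \<forall>a. ennreal (c / (1 + a\<^sup>2)) \<le> perturbed_density rho P t (Suc n) a"
proof -
  obtain m where m: "m > 0" "\<And>b. \<bar>b\<bar> \<le> 1 \<Longrightarrow> ennreal m \<le> perturbed_density rho P t n b"
    using perturbed_density_pos_on_compact[of 1 n] by blast
  obtain m' where m': "m' > 0"
    "\<And>b. \<bar>b\<bar> \<le> 1 + t\<^sup>2 \<Longrightarrow> ennreal m' \<le> perturbed_density rho P t (Suc n) b"
    using perturbed_density_pos_on_compact[of "1 + t\<^sup>2" "Suc n"] by blast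
  define c where "c = min (m * c0 * t\<^sup>2) m'"
  have c: "c > 0" unfolding c_def using m m' c0 t_pos by simp
  have "ennreal (c / (1 + a\<^sup>2)) \<le> perturbed_density rho P t (Suc n) a" for a
  proof (cases "1 + t\<^sup>2 \<le> \<bar>a\<bar>")
    case True
    have "c / (1 + a\<^sup>2) \<le> m * c0 * t\<^sup>2 / (1 + a\<^sup>2)"
      unfolding c_def by (intro divide_right_mono) auto
    moreover have "ennreal (m * c0 * t\<^sup>2 / (1 + a\<^sup>2))
        \<le> (\<integral>\<^sup>+u. perturbed_density rho P t n (a + t\<^sup>2 * u) \<partial>density lborel Q)"
      by (rule convolution_tail_lower[OF _ _ m(2) m(1) Q_lower c0]) (use t_pos True in auto)
    ultimately show ?thesis
      by (simp add: perturbed_density_Suc_density) (meson ennreal_leI order.trans)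
  next
    case False
    have "c / (1 + a\<^sup>2) \<le> c / 1" using c by (intro divide_left_mono) (auto simp: add_pos_nonneg)
    also have "\<dots> \<le> m'" unfolding c_def by simp
    finally show ?thesis using m'(2)[of a] False by (meson ennreal_leI order.trans not_le less_imp_le)
  qed
  with c show ?thesis by blast
qed

lemma perturbed_density_two_sided_decay:
  assumes "\<And>u. 1 \<le> \<bar>u\<bar> \<Longrightarrow> ennreal (c0 / u\<^sup>2) \<le> Q u" "c0 > 0" "n \<ge> 1"
  shows "\<exists>C c. C > 0 \<and> c > 0 \<and> (\<forall>b. ennreal (c / (1 + b\<^sup>2)) \<le> perturbed_density rho P t n b
    \<and> perturbed_density rho P t n b \<le> ennreal (C / (1 + b\<^sup>2)))"
proof -
  obtain c where "c > 0" "\<And>b. ennreal (c / (1 + b\<^sup>2)) \<le> perturbed_density rho P t n b"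
    using perturbed_density_lower_decay[OF assms(1,2), of "n - 1"] \<open>n \<ge> 1\<close> by auto
  with perturbed_density_decay[of n] show ?thesis by blast
qed

end

section \<open>Self-energy densities\<close>

lemma L_regular_pos: "L_regular L rho \<Longrightarrow> L > 0"
  unfolding L_regular_def by blast

lemma L_regular_decay: "L_regular L rho \<Longrightarrow> rho x \<le> L / (1 + x\<^sup>2)"
  unfolding L_regular_def by blast

lemma L_regular_le:
  assumes "L_regular L rho" shows "rho x \<le> L"
proof -
  have "L / (1 + x\<^sup>2) \<le> L / 1"
    using L_regular_pos[OF assms] by (intro divide_left_mono) (auto simp: add_pos_nonneg)
  with L_regular_decay[OF assms, of x] show ?thesis by simp
qed

lemma L_regular_pos_on_compact:
  assumes "L_regular L rho" and nonneg: "\<And>x. 0 \<le> rho x"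
  shows "\<exists>m>0. \<forall>b. \<bar>b\<bar> \<le> R \<longrightarrow> m \<le> rho b"
proof (intro exI[of _ "INF x\<in>{x. \<bar>x\<bar> < \<bar>R\<bar> + 1}. rho x"] conjI allI impI)
  show "0 < (INF x\<in>{x. \<bar>x\<bar> < \<bar>R\<bar> + 1}. rho x)"
    using assms(1) unfolding L_regular_def by (simp add: add_pos_nonneg)
  fix b :: real assume "\<bar>b\<bar> \<le> R"
  then show "(INF x\<in>{x. \<bar>x\<bar> < \<bar>R\<bar> + 1}. rho x) \<le> rho b"
    using nonneg by (intro cINF_lower bdd_belowI2[where m=0]) auto
qed

lemma two_sided_bound_mono:
  fixes y :: real
  assumes "c' \<le> c" "C \<le> C'" "d > 0" "c / d \<le> y \<and> y \<le> C / d"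
  shows "c' / d \<le> y \<and> y \<le> C' / d"
  using assms divide_right_mono[of c' c d] divide_right_mono[of C C' d] by auto

lemma prob_density_prob_space: "prob_density p \<Longrightarrow> prob_space (density lborel p)"
  unfolding prob_density_def by (intro prob_spaceI) (simp add: emeasure_density)

locale self_energy_solution =
  fixes rho p :: "real \<Rightarrow> real" and L t E :: real and K :: nat
  assumes rho_density: "prob_density rho" and rho_regular: "L_regular L rho"
    and t_positive: "t > 0" and K_ge_2: "K \<ge> 2"
    and solution: "self_energy_density rho t K E p"
begin

lemma p_density: "prob_density p"
  using solution by (simp add: self_energy_density_def)

lemma p_nonneg: "0 \<le> p x"
  using p_density by (simp add: prob_density_def)

sublocale perturbed_law rho "density lborel p" t
proof (rule perturbed_law.intro)
  show "rho \<in> borel_measurable borel" "(\<integral>\<^sup>+x. ennreal (rho x) \<partial>lborel) = 1"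
    using rho_density by (simp_all add: prob_density_def)
  show "0 \<le> rho x" for x using rho_density by (simp add: prob_density_def)
  show "prob_space (density lborel p)" using p_density by (rule prob_density_prob_space)
qed simp

abbreviation "G \<equiv> perturbed_density rho (density lborel p) t"

lemma p_eq_inverse_density: "density lborel p = density lborel (inverse_density (\<lambda>y. G K (y + E)))"
proof -
  have "density lborel p = distr (shifted_sum_law rho p t E K) borel inverse"
    using solution by (simp add: self_energy_density_def)
  also have "\<dots> = distr (density lborel (\<lambda>y. G K (y + E))) borel inverse"
    unfolding shifted_sum_law_def distr_perturbation ..
  also have "\<dots> = density lborel (inverse_density (\<lambda>y. G K (y + E)))"
    by (rule distr_inverse_density) measurable
  finally show ?thesis .
qed

sublocale heavy: heavy_tailed_perturbation rho "density lborel p" t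
  "inverse_density (\<lambda>y. G K (y + E))" L L
proof unfold_locales
  show "inverse_density (\<lambda>y. G K (y + E)) \<in> borel_measurable borel" by measurable
  show "density lborel p = density lborel (inverse_density (\<lambda>y. G K (y + E)))"
    by (rule p_eq_inverse_density)
  show "inverse_density (\<lambda>y. G K (y + E)) u \<le> ennreal (L / u\<^sup>2)" for u
    using perturbed_density_le[OF L_regular_le[OF rho_regular]] L_regular_pos[OF rho_regular]
    by (intro inverse_density_le) auto
  show "\<exists>m>0. \<forall>b. \<bar>b\<bar> \<le> R \<longrightarrow> m \<le> rho b" for R
    using L_regular_pos_on_compact[OF rho_regular rho_nonneg] .
  show "rho x \<le> L / (1 + x\<^sup>2)" for x using L_regular_decay[OF rho_regular] .
  show "0 < L" "0 \<le> L" using L_regular_pos[OF rho_regular] by simp_all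
  show "0 < t" by (rule t_positive)
qed

lemma inverse_density_lower_tail:
  "\<exists>c0>0. \<forall>u. 1 \<le> \<bar>u\<bar> \<longrightarrow> ennreal (c0 / u\<^sup>2) \<le> inverse_density (\<lambda>y. G K (y + E)) u"
proof -
  obtain m where "m > 0" "\<And>b. \<bar>b\<bar> \<le> 1 + \<bar>E\<bar> \<Longrightarrow> ennreal m \<le> G K b"
    using heavy.perturbed_density_pos_on_compact[of "1 + \<bar>E\<bar>" K] by blast
  with inverse_density_tail_lower show ?thesis by (meson less_imp_le)
qed

lemma G_two_sided_decay:
  "n \<ge> 1 \<Longrightarrow> \<exists>C c. C > 0 \<and> c > 0 \<and> (\<forall>b. ennreal (c / (1 + b\<^sup>2)) \<le> G n b
    \<and> G n b \<le> ennreal (C / (1 + b\<^sup>2)))"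
  using inverse_density_lower_tail heavy.perturbed_density_two_sided_decay by blast

lemma p_two_sided_decay:
  "\<exists>C c. C > 0 \<and> c > 0 \<and> (AE x in lborel. c / (1 + x\<^sup>2) \<le> p x \<and> p x \<le> C / (1 + x\<^sup>2))"
proof -
  obtain C c where C: "C > 0" and c: "c > 0"
    and G: "\<And>b. ennreal (c / (1 + b\<^sup>2)) \<le> G K b" "\<And>b. G K b \<le> ennreal (C / (1 + b\<^sup>2))"
    using G_two_sided_decay[of K] K_ge_2 by fastforce
  have "AE x in lborel. ennreal (p x) = inverse_density (\<lambda>y. G K (y + E)) x"
    using p_density p_eq_inverse_density
    by (intro sigma_finite_measure.density_unique[OF sigma_finite_lborel]) (auto simp: prob_density_def)
  then have "AE x in lborel. c / (2 * (1 + E\<^sup>2)) / (1 + x\<^sup>2) \<le> p x \<and> p x \<le> C * (2 + E\<^sup>2) / (1 + x\<^sup>2)"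
    using AE_lborel_singleton[of 0]
  proof eventually_elim
    case (elim x)
    have "ennreal (c / (2 * (1 + E\<^sup>2)) / (1 + x\<^sup>2)) \<le> ennreal (p x)"
      "ennreal (p x) \<le> ennreal (C * (2 + E\<^sup>2) / (1 + x\<^sup>2))"
      using inverse_density_two_sided_decay[OF G _ _ elim(2), of E] elim(1) C c by simp_all
    moreover have "0 \<le> C * (2 + E\<^sup>2) / (1 + x\<^sup>2)" using C by (simp add: add_pos_nonneg)
    ultimately show ?case using p_nonneg[of x] by simp
  qed
  moreover have "C * (2 + E\<^sup>2) > 0" "c / (2 * (1 + E\<^sup>2)) > 0" using C c by (auto simp: add_pos_nonneg)
  ultimately show ?thesis by blast
qed

lemma rhoE_eq_perturbed_density: "ennreal (rhoE rho p t E K x) = G (K - 1) (x + E)"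
  using perturbed_density_eq_integral[OF L_regular_le[OF rho_regular]] by (simp add: rhoE_def)

lemma rhoE_nonneg: "0 \<le> rhoE rho p t E K x"
  unfolding rhoE_def by (intro integral_nonneg_AE AE_I2 rho_nonneg)

lemma rhoE_two_sided_decay:
  "\<exists>C c. C > 0 \<and> c > 0 \<and> (\<forall>x. c / (1 + \<bar>x + E\<bar>\<^sup>2) \<le> rhoE rho p t E K x
     \<and> rhoE rho p t E K x \<le> C / (1 + \<bar>x + E\<bar>\<^sup>2))"
proof -
  have "K - 1 \<ge> 1" using K_ge_2 by simp
  then obtain C c where C: "C > 0" and c: "c > 0"
    and G: "\<And>b. ennreal (c / (1 + b\<^sup>2)) \<le> G (K - 1) b" "\<And>b. G (K - 1) b \<le> ennreal (C / (1 + b\<^sup>2))"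
    using G_two_sided_decay by blast
  have "c / (1 + \<bar>x + E\<bar>\<^sup>2) \<le> rhoE rho p t E K x \<and> rhoE rho p t E K x \<le> C / (1 + \<bar>x + E\<bar>\<^sup>2)"
    for x
  proof -
    have "ennreal (c / (1 + (x + E)\<^sup>2)) \<le> ennreal (rhoE rho p t E K x)"
      "ennreal (rhoE rho p t E K x) \<le> ennreal (C / (1 + (x + E)\<^sup>2))"
      using G[of "x + E"] by (simp_all add: rhoE_eq_perturbed_density)
    moreover have "0 \<le> C / (1 + (x + E)\<^sup>2)" using C by (simp add: add_pos_nonneg)
    ultimately show ?thesis using rhoE_nonneg[of x] by simp
  qed
  with C c show ?thesis by blast
qed

lemma rhoE_le_Sup: "rhoE rho p t E K x \<le> (SUP y. rho y)"
proof -
  have "bdd_above (range rho)" using L_regular_le[OF rho_regular] by (rule bdd_aboveI2)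
  then have Sup: "rho y \<le> (SUP y. rho y)" for y by (rule cSUP_upper[OF UNIV_I])
  have "ennreal (rhoE rho p t E K x) \<le> ennreal (SUP y. rho y)"
    unfolding rhoE_eq_perturbed_density by (rule perturbed_density_le[OF Sup])
  moreover have "0 \<le> (SUP y. rho y)" using Sup[of 0] rho_nonneg[of 0] by linarith
  ultimately show ?thesis by simp
qed

end


theorem lemma3p9:
  fixes rho :: "real \<Rightarrow> real" and L g t E :: real and K :: nat
    and p :: "real \<Rightarrow> real"
  assumes "prob_density rho" and "L_regular L rho"
    and "g > 0" and "K \<ge> 2" and "t = g / (real K * ln (real K))"
    and "self_energy_density rho t K E p"
  shows "\<exists>C c. C > 0 \<and> c > 0
     \<and> (AE x in lborel. c / (1 + x\<^sup>2) \<le> p x \<and> p x \<le> C / (1 + x\<^sup>2))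
     \<and> (\<forall>x. c / (1 + \<bar>x + E\<bar>\<^sup>2) \<le> rhoE rho p t E K x
            \<and> rhoE rho p t E K x \<le> C / (1 + \<bar>x + E\<bar>\<^sup>2))
     \<and> (\<forall>x. rhoE rho p t E K x \<le> (SUP y. rho y))"
proof -
  have "t > 0" using assms(3-5) by (simp add: ln_gt_zero)
  with assms interpret self_energy_solution rho p L t E K by unfold_locales
  obtain C1 c1 where "C1 > 0" "c1 > 0"
    and p: "AE x in lborel. c1 / (1 + x\<^sup>2) \<le> p x \<and> p x \<le> C1 / (1 + x\<^sup>2)"
    using p_two_sided_decay by blast
  obtain C2 c2 where "C2 > 0" "c2 > 0"
    and rhoE: "\<And>x. c2 / (1 + \<bar>x + E\<bar>\<^sup>2) \<le> rhoE rho p t E K x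
      \<and> rhoE rho p t E K x \<le> C2 / (1 + \<bar>x + E\<bar>\<^sup>2)"
    using rhoE_two_sided_decay by blast
  let ?C = "max C1 C2" and ?c = "min c1 c2"
  have "AE x in lborel. ?c / (1 + x\<^sup>2) \<le> p x \<and> p x \<le> ?C / (1 + x\<^sup>2)"
    using p by eventually_elim (rule two_sided_bound_mono, auto simp: add_pos_nonneg)
  moreover have "?c / (1 + \<bar>x + E\<bar>\<^sup>2) \<le> rhoE rho p t E K x
      \<and> rhoE rho p t E K x \<le> ?C / (1 + \<bar>x + E\<bar>\<^sup>2)" for x
    by (rule two_sided_bound_mono[OF _ _ _ rhoE]) (auto simp: add_pos_nonneg)
  ultimately show ?thesis using \<open>C1 > 0\<close> \<open>c1 > 0\<close> \<open>c2 > 0\<close> rhoE_le_Sup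
    by (intro exI[of _ ?C] exI[of _ ?c]) auto
qed

end
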